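(* Let $X$ be a metric space with bounded geometry. For every $q,k\geq 1$, $\mathrm{TO}^{q+k}_{X\times\mathbb{R}^k}(r) \lesssim \mathrm{TO}^q_X(r)\,\mathrm{TO}^k_{\mathbb{R}^k}(r) \simeq \mathrm{TO}^q_X(r)$.
   Context: $\mathbb R^k$ has the Euclidean metric and $X\times\mathbb R^k$ the $\ell^\infty$ product metric. Bounded geometry: for every $R\ge r>0$ each ball of radius $R$ is covered by a uniformly bounded number of balls of radius $r$. For $Z\subseteq X$, $\mathrm{Cov}^1(Z)$ is the minimal number of closed radius-$1$ balls of $X$ covering $Z$. For continuous $f:Z\to\mathbb R^q$, $\mathrm{Ov}(f)=\sup_{z}\mathrm{Cov}^1(f^{-1}(z))$, $\mathrm{TO}^q(Z)=\min_f\mathrm{Ov}(f)$, $\mathrm{TO}^q_X(r)=\max\{\mathrm{TO}^q(Z): Z\subseteq X,\mathrm{Cov}^1(Z)\le r\}$. $f\lesssim g$ means there is $C$ with $f(r)\le Cg(Cr)+C$ for all $r$; $\simeq$ means both directions. *)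

theory Defs
  imports "HOL-Analysis.Analysis"
begin

definition Cov1 :: "'a set \<Rightarrow> ('a \<Rightarrow> 'a \<Rightarrow> real) \<Rightarrow> 'a set \<Rightarrow> enat" where
  "Cov1 M d Z = (INF C \<in> {C. finite C \<and> C \<subseteq> M \<and> Z \<subseteq> (\<Union>c\<in>C. Metric_space.mcball M d c 1)}.
                    enat (card C))"

definition Ov :: "'a set \<Rightarrow> ('a \<Rightarrow> 'a \<Rightarrow> real) \<Rightarrow> 'a set \<Rightarrow> ('a \<Rightarrow> 'b) \<Rightarrow> enat" where
  "Ov M d Z f = (SUP z \<in> UNIV. Cov1 M d {x \<in> Z. f x = z})"

definition TO :: "'q::finite itself \<Rightarrow> 'a set \<Rightarrow> ('a \<Rightarrow> 'a \<Rightarrow> real) \<Rightarrow> 'a set \<Rightarrow> enat" where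
  "TO q M d Z = (INF f \<in> {f :: 'a \<Rightarrow> real^'q.
        continuous_map (subtopology (Metric_space.mtopology M d) Z) euclidean f}. Ov M d Z f)"

definition TO_fun :: "'q::finite itself \<Rightarrow> 'a set \<Rightarrow> ('a \<Rightarrow> 'a \<Rightarrow> real) \<Rightarrow> real \<Rightarrow> ereal" where
  "TO_fun q M d r = ereal_of_enat
      (SUP Z \<in> {Z. Z \<subseteq> M \<and> ereal_of_enat (Cov1 M d Z) \<le> ereal r}. TO q M d Z)"

definition bounded_geometry :: "'a set \<Rightarrow> ('a \<Rightarrow> 'a \<Rightarrow> real) \<Rightarrow> bool" where
  "bounded_geometry M d \<longleftrightarrow> (\<forall>r R. 0 < r \<and> r \<le> R \<longrightarrow>
     (\<exists>N::nat. \<forall>x\<in>M. \<exists>C. finite C \<and> C \<subseteq> M \<and> card C \<le> N \<and>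
        Metric_space.mcball M d x R \<subseteq> (\<Union>c\<in>C. Metric_space.mcball M d c r)))"

definition linf_prod_dist :: "('a \<Rightarrow> 'a \<Rightarrow> real) \<Rightarrow> ('a \<times> (real^'k)) \<Rightarrow> ('a \<times> (real^'k)) \<Rightarrow> real" where
  "linf_prod_dist d p p' = max (d (fst p) (fst p')) (dist (snd p) (snd p'))"

definition lesssim :: "(real \<Rightarrow> ereal) \<Rightarrow> (real \<Rightarrow> ereal) \<Rightarrow> bool" where
  "lesssim f g \<longleftrightarrow> (\<exists>C::real. C > 0 \<and> (\<forall>r. f r \<le> ereal C * g (C * r) + ereal C))"

end

theory Submission
  imports Defs
begin

(*
  For Z \<subseteq> X \<times> R^k and a continuous f on its projection, the map (x, v) \<mapsto> (f x, v)
  into R^(q+k) is continuous, and each of its fibres is a fibre of f times a single point,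
  which in the l-infinity metric needs no more unit balls than that fibre of f.
  Projection to X is 1-Lipschitz, so it does not increase Cov^1; hence TO^(q+k) of
  X \<times> R^k is bounded by TO^q of X, with constant 1.
  The identity of R^k has singleton fibres, so TO^k of R^k is 1 for r \<ge> 1, while every
  TO-function vanishes for r < 1: the product with it changes nothing.
*)

lemma Cov1_mono: "A \<subseteq> B \<Longrightarrow> Cov1 M d A \<le> Cov1 M d B"
  unfolding Cov1_def by (rule INF_mono) blast

lemma Cov1_le_card:
  assumes "Metric_space M d" "finite S" "S \<subseteq> M"
  shows "Cov1 M d S \<le> card S"
  unfolding Cov1_def
  by (rule INF_lower) (use assms Metric_space.centre_in_mcball_iff in fastforce)

lemma Cov1_ge_1:
  assumes "Z \<noteq> {}"
  shows "1 \<le> Cov1 M d Z"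
  unfolding Cov1_def
proof (rule INF_greatest)
  fix C assume "C \<in> {C. finite C \<and> C \<subseteq> M \<and> Z \<subseteq> (\<Union>c\<in>C. Metric_space.mcball M d c 1)}"
  then have "finite C" "C \<noteq> {}" using assms by auto
  then show "1 \<le> enat (card C)" by (simp add: one_enat_def Suc_leI card_gt_0_iff)
qed

lemma TO_le_Cov1: "TO (q::'q::finite itself) M d Z \<le> Cov1 M d Z"
proof -
  have "TO q M d Z \<le> Ov M d Z (\<lambda>_. 0 :: real^'q)"
    unfolding TO_def by (rule INF_lower) simp
  also have "\<dots> \<le> Cov1 M d Z"
    unfolding Ov_def by (rule SUP_least) (rule Cov1_mono, auto)
  finally show ?thesis .
qed

lemma TO_ge_1:
  assumes "Z \<noteq> {}"
  shows "1 \<le> TO q M d Z"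
  unfolding TO_def
proof (rule INF_greatest)
  fix f :: "'a \<Rightarrow> real^'q"
  obtain z where "z \<in> Z" using assms by blast
  then have "1 \<le> Cov1 M d {x \<in> Z. f x = f z}" by (intro Cov1_ge_1) auto
  also have "\<dots> \<le> Ov M d Z f" unfolding Ov_def by (rule SUP_upper) simp
  finally show "1 \<le> Ov M d Z f" .
qed

lemma TO_le_1_if_inj_on:
  fixes f :: "'a \<Rightarrow> real^'q::finite"
  assumes "Metric_space M d" "Z \<subseteq> M" "inj_on f Z"
    and "continuous_map (subtopology (Metric_space.mtopology M d) Z) euclidean f"
  shows "TO TYPE('q) M d Z \<le> 1"
proof -
  have "TO TYPE('q) M d Z \<le> Ov M d Z f"
    unfolding TO_def by (rule INF_lower) (simp add: assms(4))
  moreover have "Ov M d Z f \<le> 1"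
    unfolding Ov_def
  proof (rule SUP_least)
    fix w :: "real^'q"
    define F where "F = {x \<in> Z. f x = w}"
    have "F = f -` {w} \<inter> Z" by (auto simp: F_def)
    then have fin: "finite F"
      using finite_vimage_IntI[OF _ assms(3)] by simp
    have "\<forall>x\<in>F. \<forall>y\<in>F. x = y"
      using assms(3) by (auto simp: F_def dest: inj_onD)
    then have card: "card F \<le> 1"
      using card_le_Suc0_iff_eq[OF fin] by simp
    have "Cov1 M d F \<le> enat (card F)"
      by (rule Cov1_le_card[OF assms(1) fin]) (use assms(2) in \<open>auto simp: F_def\<close>)
    also have "\<dots> \<le> 1"
      using card by (simp add: one_enat_def)
    finally show "Cov1 M d {x \<in> Z. f x = w} \<le> 1"
      by (simp add: F_def)
  qed
  ultimately show ?thesis by (rule order_trans)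
qed

lemma TO_fun_eq_0:
  assumes "r < 1"
  shows "TO_fun q M d r = 0"
proof -
  have "TO q M d Z \<le> 0" if "ereal_of_enat (Cov1 M d Z) \<le> ereal r" for Z
  proof -
    have "Cov1 M d Z = 0"
    proof (cases "Cov1 M d Z")
      case (enat n)
      then have "real n < 1" using that assms by simp
      then show ?thesis using enat by (simp add: enat_0)
    qed (use that in simp)
    then show ?thesis
      using TO_le_Cov1[of q M d Z] by simp
  qed
  then have "(SUP Z\<in>{Z. Z \<subseteq> M \<and> ereal_of_enat (Cov1 M d Z) \<le> ereal r}. TO q M d Z) \<le> 0"
    by (intro SUP_least) blast
  then show ?thesis
    unfolding TO_fun_def by (simp add: le_zero_eq)
qed

definition nonexpansive ::
    "'a set \<Rightarrow> ('a \<Rightarrow> 'a \<Rightarrow> real) \<Rightarrow> 'b set \<Rightarrow> ('b \<Rightarrow> 'b \<Rightarrow> real) \<Rightarrow> ('a \<Rightarrow> 'b) \<Rightarrow> bool" where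
  "nonexpansive M1 d1 M2 d2 h \<longleftrightarrow> h ` M1 \<subseteq> M2 \<and> (\<forall>x\<in>M1. \<forall>y\<in>M1. d2 (h x) (h y) \<le> d1 x y)"

lemma nonexpansive_imp_continuous_map:
  assumes "Metric_space M1 d1" "Metric_space M2 d2" "nonexpansive M1 d1 M2 d2 h"
  shows "continuous_map (Metric_space.mtopology M1 d1) (Metric_space.mtopology M2 d2) h"
proof -
  interpret Metric_space M1 d1 by fact
  show ?thesis
    using assms(3) unfolding metric_continuous_map[OF assms(2)] nonexpansive_def
    by (meson le_less_trans)
qed

lemma Cov1_image_le:
  assumes "Metric_space M1 d1" "Metric_space M2 d2" "nonexpansive M1 d1 M2 d2 h"
  shows "Cov1 M2 d2 (h ` Z) \<le> Cov1 M1 d1 Z"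
  unfolding Cov1_def
proof (rule INF_mono)
  fix C assume C: "C \<in> {C. finite C \<and> C \<subseteq> M1 \<and> Z \<subseteq> (\<Union>c\<in>C. Metric_space.mcball M1 d1 c 1)}"
  have "h ` Z \<subseteq> (\<Union>c\<in>h ` C. Metric_space.mcball M2 d2 c 1)"
  proof
    fix y assume "y \<in> h ` Z"
    then obtain x where "x \<in> Z" "y = h x" by blast
    then obtain c where "c \<in> C" "x \<in> Metric_space.mcball M1 d1 c 1" using C by blast
    then have "c \<in> M1" "x \<in> M1" "d1 c x \<le> 1"
      by (auto simp: Metric_space.in_mcball[OF assms(1)])
    with assms(3) have "h c \<in> M2" "h x \<in> M2" "d2 (h c) (h x) \<le> 1"
      unfolding nonexpansive_def by (blast, blast, force)
    then have "h x \<in> Metric_space.mcball M2 d2 (h c) 1"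
      by (simp add: Metric_space.in_mcball[OF assms(2)])
    then show "y \<in> (\<Union>c\<in>h ` C. Metric_space.mcball M2 d2 c 1)"
      using \<open>c \<in> C\<close> \<open>y = h x\<close> by blast
  qed
  moreover have "h ` C \<subseteq> M2"
    using C assms(3) unfolding nonexpansive_def by blast
  moreover have "card (h ` C) \<le> card C"
    using C by (simp add: card_image_le)
  ultimately show "\<exists>C'\<in>{C. finite C \<and> C \<subseteq> M2 \<and> h ` Z \<subseteq> (\<Union>c\<in>C. Metric_space.mcball M2 d2 c 1)}.
      enat (card C') \<le> enat (card C)"
    using C by (intro bexI[of _ "h ` C"]) auto
qed

lemma Metric_space_linf_prod_dist:
  assumes "Metric_space M d"
  shows "Metric_space (M \<times> (UNIV :: (real^'k::finite) set)) (linf_prod_dist d)"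
proof -
  interpret Metric_space M d by fact
  show ?thesis
  proof
    fix p q :: "'a \<times> (real^'k)"
    show "0 \<le> linf_prod_dist d p q" "linf_prod_dist d p q = linf_prod_dist d q p"
      by (auto simp: linf_prod_dist_def commute max_def dist_commute)
  next
    fix p q assume "p \<in> M \<times> (UNIV :: (real^'k) set)" "q \<in> M \<times> (UNIV :: (real^'k) set)"
    then have "fst p \<in> M" "fst q \<in> M" by auto
    then show "linf_prod_dist d p q = 0 \<longleftrightarrow> p = q"
      using nonneg[of "fst p" "fst q"] zero[of "fst p" "fst q"]
      unfolding linf_prod_dist_def prod_eq_iff max_def
      by (smt (verit) zero_le_dist dist_eq_0_iff)
  next
    fix p q r assume "p \<in> M \<times> (UNIV :: (real^'k) set)" "q \<in> M \<times> (UNIV :: (real^'k) set)"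
      "r \<in> M \<times> (UNIV :: (real^'k) set)"
    then show "linf_prod_dist d p r \<le> linf_prod_dist d p q + linf_prod_dist d q r"
      using triangle[of "fst p" "fst q" "fst r"] dist_triangle[of "snd p" "snd r" "snd q"]
        nonneg[of "fst p" "fst q"] nonneg[of "fst q" "fst r"]
      by (auto simp: linf_prod_dist_def max_def)
  qed
qed

lemma nonexpansive_fst:
  "nonexpansive (M \<times> (UNIV :: (real^'k::finite) set)) (linf_prod_dist d) M d fst"
  by (auto simp: nonexpansive_def linf_prod_dist_def)

lemma nonexpansive_snd:
  "nonexpansive (M \<times> (UNIV :: (real^'k::finite) set)) (linf_prod_dist d) UNIV dist snd"
  by (auto simp: nonexpansive_def linf_prod_dist_def)

lemma nonexpansive_Pair_const:
  assumes "Metric_space M d"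
  shows "nonexpansive M d (M \<times> (UNIV :: (real^'k::finite) set)) (linf_prod_dist d) (\<lambda>x. (x, b))"
  using Metric_space.nonneg[OF assms] by (auto simp: nonexpansive_def linf_prod_dist_def)

definition vec_join :: "real^'q \<Rightarrow> real^'k \<Rightarrow> real^('q::finite + 'k::finite)" where
  "vec_join u v = (\<chi> i. case i of Inl a \<Rightarrow> u $ a | Inr b \<Rightarrow> v $ b)"

lemma vec_join_eq_iff:
  "vec_join u v = w \<longleftrightarrow> u = (\<chi> a. w $ Inl a) \<and> v = (\<chi> b. w $ Inr b)"
  by (auto simp: vec_eq_iff vec_join_def split: sum.split)

lemma continuous_on_vec_join: "continuous_on UNIV (\<lambda>(u, v). vec_join u v)"
  unfolding vec_join_def case_prod_beta
proof (intro continuous_on_vec_lambda)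
  fix i :: "'q::finite + 'k::finite"
  show "continuous_on UNIV (\<lambda>x. case i of Inl a \<Rightarrow> fst x $ a | Inr b \<Rightarrow> snd x $ b)"
    by (cases i) (simp_all add: continuous_on_component continuous_on_fst continuous_on_snd)
qed

lemma continuous_map_vec_join:
  assumes "continuous_map X euclidean f" "continuous_map X euclidean g"
  shows "continuous_map X euclidean (\<lambda>x. vec_join (f x) (g x))"
proof -
  have "continuous_map X euclidean (\<lambda>x. (f x, g x))"
    using assms by (simp flip: prod_topology_euclidean add: continuous_map_pairwise o_def)
  moreover have "continuous_map euclidean euclidean (\<lambda>(u, v). vec_join u v)"
    using continuous_on_vec_join by simp
  ultimately have "continuous_map X euclidean ((\<lambda>(u, v). vec_join u v) \<circ> (\<lambda>x. (f x, g x)))"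
    by (rule continuous_map_compose)
  then show ?thesis
    by (simp add: o_def)
qed

lemma continuous_map_vec_join_fst_snd:
  fixes f :: "'a \<Rightarrow> real^'q::finite"
    and Z :: "('a \<times> (real^'k::finite)) set"
  assumes "Metric_space M d"
    and "continuous_map (subtopology (Metric_space.mtopology M d) (fst ` Z)) euclidean f"
  shows "continuous_map (subtopology (Metric_space.mtopology (M \<times> UNIV) (linf_prod_dist d)) Z) euclidean
           (\<lambda>p. vec_join (f (fst p)) (snd p))"
proof -
  let ?X = "subtopology (Metric_space.mtopology (M \<times> (UNIV :: (real^'k) set)) (linf_prod_dist d)) Z"
  note prod = Metric_space_linf_prod_dist[OF assms(1)]
  have "continuous_map ?X (subtopology (Metric_space.mtopology M d) (fst ` Z)) fst"
    by (intro continuous_map_into_subtopology continuous_map_from_subtopology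
        nonexpansive_imp_continuous_map[OF prod assms(1) nonexpansive_fst]) auto
  then have "continuous_map ?X euclidean (f \<circ> fst)"
    using assms(2) by (rule continuous_map_compose)
  moreover have "continuous_map ?X euclidean snd"
    using continuous_map_from_subtopology[OF
        nonexpansive_imp_continuous_map[OF prod Met_TC.Metric_space_axioms nonexpansive_snd]]
    by simp
  ultimately show ?thesis
    using continuous_map_vec_join by (simp add: o_def)
qed

lemma Ov_vec_join_le:
  fixes f :: "'a \<Rightarrow> real^'q::finite"
    and Z :: "('a \<times> (real^'k::finite)) set"
  assumes "Metric_space M d"
  shows "Ov (M \<times> UNIV) (linf_prod_dist d) Z (\<lambda>p. vec_join (f (fst p)) (snd p)) \<le> Ov M d (fst ` Z) f"
  unfolding Ov_def
proof (rule SUP_least)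
  fix w :: "real^('q + 'k)"
  define u v where "u = (\<chi> a. w $ Inl a)" and "v = (\<chi> b. w $ Inr b)"
  have "{p \<in> Z. vec_join (f (fst p)) (snd p) = w} \<subseteq> (\<lambda>x. (x, v)) ` {x \<in> fst ` Z. f x = u}"
  proof
    fix p assume "p \<in> {p \<in> Z. vec_join (f (fst p)) (snd p) = w}"
    then have "p \<in> Z" "f (fst p) = u" "snd p = v"
      by (auto simp: vec_join_eq_iff u_def v_def)
    then show "p \<in> (\<lambda>x. (x, v)) ` {x \<in> fst ` Z. f x = u}"
      by (intro image_eqI[of _ _ "fst p"]) (auto simp: prod_eq_iff)
  qed
  then have "Cov1 (M \<times> UNIV) (linf_prod_dist d) {p \<in> Z. vec_join (f (fst p)) (snd p) = w}
      \<le> Cov1 (M \<times> UNIV) (linf_prod_dist d) ((\<lambda>x. (x, v)) ` {x \<in> fst ` Z. f x = u})"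
    by (rule Cov1_mono)
  also have "\<dots> \<le> Cov1 M d {x \<in> fst ` Z. f x = u}"
    by (rule Cov1_image_le[OF assms Metric_space_linf_prod_dist[OF assms] nonexpansive_Pair_const[OF assms]])
  also have "\<dots> \<le> (SUP z\<in>UNIV. Cov1 M d {x \<in> fst ` Z. f x = z})"
    by (rule SUP_upper) simp
  finally show "Cov1 (M \<times> UNIV) (linf_prod_dist d) {p \<in> Z. vec_join (f (fst p)) (snd p) = w}
      \<le> (SUP z\<in>UNIV. Cov1 M d {x \<in> fst ` Z. f x = z})" .
qed

lemma TO_product_le:
  fixes Z :: "('a \<times> (real^'k::finite)) set"
  assumes "Metric_space M d"
  shows "TO TYPE('q::finite + 'k) (M \<times> UNIV) (linf_prod_dist d) Z \<le> TO TYPE('q) M d (fst ` Z)"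
  unfolding TO_def
proof (rule INF_mono)
  fix f :: "'a \<Rightarrow> real^'q"
  assume "f \<in> {f. continuous_map (subtopology (Metric_space.mtopology M d) (fst ` Z)) euclidean f}"
  then have "continuous_map (subtopology (Metric_space.mtopology (M \<times> UNIV) (linf_prod_dist d)) Z)
      euclidean (\<lambda>p. vec_join (f (fst p)) (snd p))"
    by (simp add: continuous_map_vec_join_fst_snd[OF assms])
  then show "\<exists>g\<in>{g :: 'a \<times> (real^'k) \<Rightarrow> real^('q + 'k). continuous_map (subtopology (Metric_space.mtopology (M \<times> UNIV) (linf_prod_dist d)) Z) euclidean g}.
      Ov (M \<times> UNIV) (linf_prod_dist d) Z g \<le> Ov M d (fst ` Z) f"
    by (intro bexI[of _ "\<lambda>p. vec_join (f (fst p)) (snd p)"] Ov_vec_join_le[OF assms]) simp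
qed

lemma TO_fun_product_le:
  assumes "Metric_space M d"
  shows "TO_fun TYPE('q::finite + 'k::finite) (M \<times> (UNIV :: (real^'k) set)) (linf_prod_dist d) r
     \<le> TO_fun TYPE('q) M d r"
  unfolding TO_fun_def ereal_of_enat_le_iff
proof (rule SUP_mono)
  fix Z :: "('a \<times> (real^'k)) set"
  assume Z: "Z \<in> {Z. Z \<subseteq> M \<times> UNIV \<and> ereal_of_enat (Cov1 (M \<times> UNIV) (linf_prod_dist d) Z) \<le> ereal r}"
  have "Cov1 M d (fst ` Z) \<le> Cov1 (M \<times> UNIV) (linf_prod_dist d) Z"
    by (rule Cov1_image_le[OF Metric_space_linf_prod_dist[OF assms] assms nonexpansive_fst])
  then have "fst ` Z \<in> {Z. Z \<subseteq> M \<and> ereal_of_enat (Cov1 M d Z) \<le> ereal r}"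
    using Z by (auto simp flip: ereal_of_enat_le_iff intro: order_trans)
  then show "\<exists>Z'\<in>{Z. Z \<subseteq> M \<and> ereal_of_enat (Cov1 M d Z) \<le> ereal r}.
      TO TYPE('q + 'k) (M \<times> UNIV) (linf_prod_dist d) Z \<le> TO TYPE('q) M d Z'"
    using TO_product_le[OF assms] by blast
qed

lemma TO_fun_euclidean:
  "TO_fun TYPE('k) (UNIV :: (real^'k::finite) set) dist r = (if r < 1 then 0 else 1)"
proof (cases "r < 1")
  case True
  then show ?thesis by (simp add: TO_fun_eq_0)
next
  case False
  let ?S = "{Z :: (real^'k) set. Z \<subseteq> UNIV \<and> ereal_of_enat (Cov1 UNIV dist Z) \<le> ereal r}"
  have le_1: "TO TYPE('k) UNIV dist Z \<le> 1" for Z :: "(real^'k) set"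
    by (rule TO_le_1_if_inj_on[OF Met_TC.Metric_space_axioms, where f = id])
      (simp_all add: continuous_map_from_subtopology)
  have "(SUP Z\<in>?S. TO TYPE('k) UNIV dist Z) \<le> 1"
    by (rule SUP_least) (rule le_1)
  moreover have "1 \<le> (SUP Z\<in>?S. TO TYPE('k) UNIV dist Z)"
  proof (rule SUP_upper2)
    have "Cov1 UNIV dist {0 :: real^'k} \<le> enat 1"
      using Cov1_le_card[OF Met_TC.Metric_space_axioms, of "{0}"] by simp
    then have "ereal_of_enat (Cov1 UNIV dist {0 :: real^'k}) \<le> ereal_of_enat (enat 1)"
      by (simp only: ereal_of_enat_le_iff)
    also have "\<dots> \<le> ereal r"
      using False by simp
    finally show "{0} \<in> ?S"
      by simp
    show "1 \<le> TO TYPE('k) UNIV dist {0 :: real^'k}"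
      by (rule TO_ge_1) simp
  qed
  ultimately have "(SUP Z\<in>?S. TO TYPE('k) UNIV dist Z) = 1"
    by (rule antisym)
  then show ?thesis
    using False by (simp add: TO_fun_def one_enat_def one_ereal_def)
qed

lemma TO_fun_mult_euclidean:
  "TO_fun q M d r * TO_fun TYPE('k) (UNIV :: (real^'k::finite) set) dist r = TO_fun q M d r"
  by (simp add: TO_fun_euclidean TO_fun_eq_0)

lemma le_imp_lesssim:
  assumes "\<And>r. f r \<le> g r"
  shows "lesssim f g"
proof -
  have "f r \<le> g r + 1" for r
    by (rule order_trans[OF assms]) (cases "g r"; simp)
  then have "f r \<le> ereal 1 * g (1 * r) + ereal 1" for r
    by (simp add: one_ereal_def[symmetric])
  then show ?thesis
    unfolding lesssim_def by (intro exI[of _ 1]) simp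
qed

theorem corollary1p10:
  fixes M :: "'a set" and d :: "'a \<Rightarrow> 'a \<Rightarrow> real"
  assumes "Metric_space M d" and "bounded_geometry M d"
  shows "lesssim (TO_fun TYPE('q::finite + 'k::finite) (M \<times> (UNIV :: (real^'k) set)) (linf_prod_dist d))
            (\<lambda>r. TO_fun TYPE('q) M d r * TO_fun TYPE('k) (UNIV :: (real^'k) set) dist r)
       \<and> lesssim (\<lambda>r. TO_fun TYPE('q) M d r * TO_fun TYPE('k) (UNIV :: (real^'k) set) dist r)
            (TO_fun TYPE('q) M d)
       \<and> lesssim (TO_fun TYPE('q) M d)
            (\<lambda>r. TO_fun TYPE('q) M d r * TO_fun TYPE('k) (UNIV :: (real^'k) set) dist r)"
  unfolding TO_fun_mult_euclidean
  by (intro conjI le_imp_lesssim TO_fun_product_le[OF assms(1)] order_refl)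

end
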